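(* For any $\epsilon>0$ there exist $c,n_0>0$ depending on $\epsilon$ such that for all $n\ge n_0$ and every $y\in\mathbb{S}^{n-1}$, \[\mathbb{P}\big[\|yQ_n\|_2\le c\sqrt{n}\big]\le(1/2+\epsilon)^n.\]
   Context: $Q_n$ is an $n\times n$ random matrix with independent rows, each uniform on the vectors of $\{0,1\}^n$ with coordinate sum $\lfloor n/2\rfloor$; $yQ_n$ denotes the row vector $y$ times $Q_n$. $\mathbb{S}^{n-1}$ is the Euclidean unit sphere in $\mathbb{R}^n$. *)

theory Defs
  imports "HOL-Probability.Probability"
begin

text \<open>Vectors in R^n are functions nat => real, only indices 0..n-1 matter.
  The admissible rows: 0/1-vectors of length n with coordinate sum floor(n/2)
  (coordinates outside {0..<n} are set to 0).\<close>
definition bal_rows :: "nat \<Rightarrow> (nat \<Rightarrow> real) set" where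
  "bal_rows n = {v. (\<forall>j<n. v j \<in> {0, 1}) \<and> (\<forall>j\<ge>n. v j = 0)
                    \<and> (\<Sum>j<n. v j) = real (n div 2)}"

definition random_Q :: "nat \<Rightarrow> (nat \<Rightarrow> nat \<Rightarrow> real) pmf" where
  "random_Q n = Pi_pmf {..<n} (\<lambda>_. 0) (\<lambda>_. pmf_of_set (bal_rows n))"

definition vecmat :: "nat \<Rightarrow> (nat \<Rightarrow> real) \<Rightarrow> (nat \<Rightarrow> nat \<Rightarrow> real) \<Rightarrow> nat \<Rightarrow> real" where
  "vecmat n y Q = (\<lambda>j. \<Sum>i<n. y i * Q i j)"

definition l2norm :: "nat \<Rightarrow> (nat \<Rightarrow> real) \<Rightarrow> real" where
  "l2norm n v = sqrt (\<Sum>j<n. (v j)\<^sup>2)"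

end

(* Write yQ_n = sum_i y_i Q_i as a combination of the independent balanced rows Q_i.

   If some |y_i| >= delta, condition on the other rows: all values of Q_i that keep
   ||yQ_n|| <= c sqrt n lie in a Hamming ball of radius alpha n (alpha ~ c^2 / delta^2) around
   any one of them.  Such a ball has at most (1 + eps)^n points, while there are about
   2^n / sqrt n balanced rows.

   If all |y_i| < delta, Esseen's Fourier argument shows that a uniform 0/1 vector x has
   |<y, x>| <= 1/w only with probability O(1/w).  A small norm forces all but n/16 of the first
   n/2 columns of Q_n to be of this kind, and fixing these columns leaves each row only a
   2^(1 - n/2) fraction of its choices; together this gives (1/2)^n. *)

theory Submission
  imports Defs
begin

section \<open>Central binomial coefficients\<close>

lemma binomial_double_Suc: "Suc (Suc (2*k)) choose Suc k = 2 * (Suc (2*k) choose k)"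
proof -
  have "Suc (2*k) choose Suc k = Suc (2*k) choose k"
    using binomial_symmetric[of "Suc k" "Suc (2*k)"] by simp
  then show ?thesis by (simp only: binomial_Suc_Suc mult_2)
qed

lemma Suc_times_binomial_double: "Suc k * (Suc (2*k) choose k) = Suc (2*k) * ((2*k) choose k)"
proof -
  have "Suc k * (Suc (k+k) choose Suc k) = Suc k * (Suc (k+k) choose k)"
    by (rule Suc_times_binomial_add)
  moreover have "Suc k * (Suc (k+k) choose Suc k) = Suc (k+k) * ((k+k) choose k)"
    by (rule Suc_times_binomial)
  ultimately show ?thesis by (simp only: mult_2)
qed

lemma central_binomial_even_sq_bounds:
  "16^k \<le> real ((2*k) choose k)^2 * (4 * real k + 1) \<and> real ((2*k) choose k)^2 * (2 * real k + 1) \<le> 16^k"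
proof (induction k)
  case 0
  then show ?case by simp
next
  case (Suc k)
  define r where "r = real k"
  define a where "a = real ((2*k) choose k)"
  define b where "b = real ((2*Suc k) choose Suc k)"
  have "2 * Suc k = Suc (Suc (2*k))" by simp
  then have "b = 2 * real (Suc (2*k) choose k)"
    unfolding b_def by (simp only: binomial_double_Suc of_nat_mult of_nat_numeral)
  moreover have "real (Suc k * (Suc (2*k) choose k)) = real (Suc (2*k) * ((2*k) choose k))"
    by (simp only: Suc_times_binomial_double)
  ultimately have "(r+1) * b = 2*(2*r+1) * a"
    unfolding a_def r_def by (simp add: algebra_simps)
  then have "((r+1) * b)^2 = (2*(2*r+1) * a)^2"
    by (rule arg_cong)
  then have b2: "b^2 * (r+1)^2 = 4*(2*r+1)^2 * a^2"
    by (simp only: power_mult_distrib) (simp add: ac_simps)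
  have IH: "16^k \<le> a^2*(4*r+1)" "a^2*(2*r+1) \<le> 16^k"
    using Suc.IH unfolding a_def r_def by (simp_all add: algebra_simps)
  have "16^Suc k * (r+1)^2 \<le> (a^2*(4*r+1)) * (16*(r+1)^2)"
    using mult_right_mono[OF IH(1), of "16*(r+1)^2"] by simp
  also have "\<dots> \<le> a^2 * (4*(2*r+1)^2 * (4*r+5))"
    unfolding mult.assoc by (intro mult_left_mono) (auto simp: power2_eq_square algebra_simps r_def)
  also have "\<dots> = b^2 * (4*(r+1)+1) * (r+1)^2"
    using b2 by (simp add: algebra_simps)
  finally have lower: "16^Suc k \<le> b^2 * (4*(r+1)+1)"
    by (simp add: r_def)
  have "b^2 * (2*(r+1)+1) * (r+1)^2 = (b^2 * (r+1)^2) * (2*r+3)"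
    by (simp add: algebra_simps)
  also have "\<dots> = (a^2*(2*r+1)) * (4*(2*r+1)*(2*r+3))"
    unfolding b2 by (simp add: algebra_simps power2_eq_square)
  also have "\<dots> \<le> 16^k * (16*(r+1)^2)"
  proof (rule mult_mono[OF IH(2)])
    show "4*(2*r+1)*(2*r+3) \<le> 16*(r+1)^2"
      by (simp add: power2_eq_square algebra_simps)
  qed (simp_all add: r_def)
  finally have upper: "b^2 * (2*(r+1)+1) \<le> 16^Suc k"
    by (simp add: r_def)
  show ?case
    using lower upper unfolding b_def r_def by (simp add: algebra_simps)
qed

lemma central_binomial_sq_bounds:
  "4^n \<le> real (n choose (n div 2))^2 * (2 * real n + 3) \<and> real (n choose (n div 2))^2 * (real n + 1) \<le> 4^n"
proof (cases "even n")
  case True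
  then obtain k where n: "n = 2*k" by blast
  define C where "C = real ((2*k) choose k)"
  have eq: "(4::real)^n = 16^k" "real (n choose (n div 2)) = C" "real n = 2 * real k"
    by (simp_all add: n power_mult C_def)
  have "(16::real)^k \<le> C^2 * (4 * real k + 1)" "C^2 * (2 * real k + 1) \<le> 16^k"
    using central_binomial_even_sq_bounds[of k] unfolding C_def by blast+
  moreover have "C^2 * (4 * real k + 1) \<le> C^2 * (4 * real k + 3)"
    by (intro mult_left_mono) auto
  ultimately have "16^k \<le> C^2 * (2 * (2 * real k) + 3) \<and> C^2 * (2 * real k + 1) \<le> 16^k"
    by simp
  then show ?thesis
    unfolding eq .
next
  case False
  then obtain k where "n = 2*k + 1"
    by (rule oddE)
  then have n: "n = Suc (2*k)"
    by simp
  define N where "N = real (n choose (n div 2))"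
  have "2 * Suc k = Suc (Suc (2*k))" by simp
  then have B: "real ((2 * Suc k) choose Suc k) = 2 * N"
    unfolding N_def n by (simp only: binomial_double_Suc of_nat_mult of_nat_numeral) simp
  have P: "(16::real)^Suc k = 4 * 4^n"
    by (simp add: n power_mult)
  have lo: "4 * 4^n \<le> (2*N)^2 * (4 * real (Suc k) + 1)"
    and up: "(2*N)^2 * (2 * real (Suc k) + 1) \<le> 4 * 4^n"
    using central_binomial_even_sq_bounds[of "Suc k"] unfolding B P by blast+
  have "(2*N)^2 * (4 * real (Suc k) + 1) = 4 * (N^2 * (2 * real n + 3))"
    "(2*N)^2 * (2 * real (Suc k) + 1) = 4 * (N^2 * (real n + 2))"
    by (simp_all add: n power_mult_distrib algebra_simps)
  then have "4^n \<le> N^2 * (2 * real n + 3)" "N^2 * (real n + 2) \<le> 4^n"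
    using lo up by linarith+
  moreover have "N^2 * (real n + 1) \<le> N^2 * (real n + 2)"
    by (intro mult_left_mono) auto
  ultimately show ?thesis
    unfolding N_def[symmetric] by (meson order.trans)
qed

lemma central_binomial_ge: "2^n \<le> (n+1) * (n choose (n div 2))"
proof -
  have "2^n = (\<Sum>k\<le>n. n choose k)"
    by (rule choose_row_sum[symmetric])
  also have "\<dots> \<le> (\<Sum>k\<le>n. n choose (n div 2))"
    by (intro sum_mono binomial_maximum)
  finally show ?thesis by simp
qed

lemma central_binomial_half_le:
  "2^(n div 2) * real ((n - n div 2) choose ((n - n div 2) div 2)) \<le> 2 * real (n choose (n div 2))"
proof -
  define h where "h = n div 2"
  define m where "m = n - h"
  define D where "D = real (m choose (m div 2))"
  define N where "N = real (n choose (n div 2))"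
  have "((2::real)^h)^2 = (2^2)^h"
    by (simp only: mult.commute flip: power_mult)
  then have "(2^h * D)^2 * (real m + 1) = 4^h * (D^2 * (real m + 1))"
    by (simp add: power_mult_distrib)
  also have "\<dots> \<le> 4^h * 4^m"
    using central_binomial_sq_bounds[of m] by (intro mult_left_mono) (auto simp: D_def)
  also have "\<dots> = 4^n"
    by (simp add: m_def h_def flip: power_add)
  also have "\<dots> \<le> N^2 * (2 * real n + 3)"
    using central_binomial_sq_bounds[of n] by (simp add: N_def)
  also have "\<dots> \<le> N^2 * (4 * (real m + 1))"
    by (intro mult_left_mono) (auto simp: m_def h_def)
  finally have "(2^h * D)^2 * (real m + 1) \<le> (2*N)^2 * (real m + 1)"
    by (simp add: power_mult_distrib algebra_simps)
  then have "(2^h * D)^2 \<le> (2*N)^2"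
    by (rule mult_right_le_imp_le) simp
  then show ?thesis
    unfolding h_def m_def D_def N_def by (rule power2_le_imp_le) simp
qed

section \<open>Counting in the discrete cube\<close>

lemma PiE_dflt_I:
  "(\<And>x. x \<in> A \<Longrightarrow> f x \<in> B x) \<Longrightarrow> (\<And>x. x \<notin> A \<Longrightarrow> f x = d)
    \<Longrightarrow> f \<in> PiE_dflt A d B"
  by (simp add: PiE_dflt_def)

lemma card_le_mult_fibres:
  assumes "finite A" "finite B" "f ` A \<subseteq> B" "\<And>b. b \<in> B \<Longrightarrow> card {a\<in>A. f a = b} \<le> k"
  shows "card A \<le> card B * k"
proof -
  have "A = (\<Union>b\<in>B. {a\<in>A. f a = b})"
    using assms(3) by auto
  then have "card A \<le> (\<Sum>b\<in>B. card {a\<in>A. f a = b})"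
    by (metis card_UN_le assms(2))
  also have "\<dots> \<le> (\<Sum>b\<in>B. k)"
    by (intro sum_mono assms(4))
  finally show ?thesis
    by simp
qed

lemma card_large_terms_le:
  fixes a :: "'a \<Rightarrow> real"
  assumes "finite J" "(\<Sum>j\<in>J. (a j)^2) \<le> B" "0 < t"
  shows "real (card {j\<in>J. t < \<bar>a j\<bar>}) * t^2 \<le> B"
proof -
  have "real (card {j\<in>J. t < \<bar>a j\<bar>}) * t^2 \<le> (\<Sum>j\<in>{j\<in>J. t < \<bar>a j\<bar>}. (a j)^2)"
  proof (rule sum_bounded_below)
    fix j assume "j \<in> {j\<in>J. t < \<bar>a j\<bar>}"
    then have "t^2 \<le> \<bar>a j\<bar>^2"
      using assms(3) by (intro power_mono) auto
    then show "t^2 \<le> (a j)^2"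
      by simp
  qed
  also have "\<dots> \<le> (\<Sum>j\<in>J. (a j)^2)"
    using assms(1) by (intro sum_mono2) auto
  finally show ?thesis
    using assms(2) by linarith
qed

lemma card_tuples_mostly_in_le:
  fixes A S :: "'a set" and \<eta> :: real
  assumes A: "finite A" "S \<subseteq> A" and S: "real (card S) \<le> \<eta> * card A" and \<eta>: "0 \<le> \<eta>" "\<eta> \<le> 1"
  shows "real (card {X\<in>PiE_dflt {..<h} d (\<lambda>_. A). card {j. j < h \<and> X j \<notin> S} \<le> m})
      \<le> 2^h * real (card A)^h * \<eta>^(h - m)"
proof -
  define box where "box T = PiE_dflt {..<h} d (\<lambda>j. if j \<in> T then S else A)" for T
  define Ts where "Ts = {T. T \<subseteq> {..<h} \<and> h \<le> card T + m}"
  have finite_S: "finite S"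
    using A finite_subset by blast
  have finite_box: "finite (box T)" for T
    unfolding box_def using A finite_S by (intro finite_PiE_dflt) auto
  have finite_Ts: "finite Ts"
    unfolding Ts_def by (rule finite_subset[of _ "Pow {..<h}"]) auto
  have "{X\<in>PiE_dflt {..<h} d (\<lambda>_. A). card {j. j < h \<and> X j \<notin> S} \<le> m} \<subseteq> (\<Union>T\<in>Ts. box T)"
  proof clarify
    fix X assume X: "X \<in> PiE_dflt {..<h} d (\<lambda>_. A)" "card {j. j < h \<and> X j \<notin> S} \<le> m"
    define T where "T = {j. j < h \<and> X j \<in> S}"
    have "{..<h} = T \<union> {j. j < h \<and> X j \<notin> S}" "T \<inter> {j. j < h \<and> X j \<notin> S} = {}"
      by (auto simp: T_def)
    then have "h = card T + card {j. j < h \<and> X j \<notin> S}"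
      by (metis card_Un_disjoint card_lessThan finite_Un finite_lessThan)
    then have "T \<in> Ts"
      using X(2) by (auto simp: Ts_def T_def)
    moreover have "X \<in> box T"
      unfolding box_def PiE_dflt_def mem_Collect_eq
    proof (intro allI conjI impI)
      fix j assume "j \<in> {..<h}"
      then show "X j \<in> (if j \<in> T then S else A)"
        using X(1) by (simp add: T_def PiE_dflt_def)
    next
      fix j assume "j \<notin> {..<h}"
      then show "X j = d"
        using X(1) by (simp add: PiE_dflt_def)
    qed
    ultimately show "X \<in> (\<Union>T\<in>Ts. box T)"
      by blast
  qed
  then have "card {X\<in>PiE_dflt {..<h} d (\<lambda>_. A). card {j. j < h \<and> X j \<notin> S} \<le> m}
      \<le> card (\<Union>T\<in>Ts. box T)"
    using finite_Ts finite_box by (intro card_mono) auto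
  also have "\<dots> \<le> (\<Sum>T\<in>Ts. card (box T))"
    by (rule card_UN_le[OF finite_Ts])
  finally have "real (card {X\<in>PiE_dflt {..<h} d (\<lambda>_. A). card {j. j < h \<and> X j \<notin> S} \<le> m})
      \<le> (\<Sum>T\<in>Ts. real (card (box T)))"
    by (simp only: of_nat_sum[symmetric] of_nat_le_iff)
  also have "\<dots> \<le> (\<Sum>T\<in>Ts. real (card A)^h * \<eta>^(h - m))"
  proof (rule sum_mono)
    fix T assume T: "T \<in> Ts"
    have "real (card (box T)) = (\<Prod>j<h. real (card (if j \<in> T then S else A)))"
      unfolding box_def using A finite_S by (subst card_PiE_dflt) auto
    also have "\<dots> \<le> (\<Prod>j<h. (if j \<in> T then \<eta> else 1) * real (card A))"
      using S by (intro prod_mono) auto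
    also have "\<dots> = \<eta>^(card T) * real (card A)^h"
      using T by (simp add: Ts_def prod.distrib prod.If_cases Int_absorb1)
    also have "\<dots> \<le> \<eta>^(h - m) * real (card A)^h"
      using T \<eta> by (intro mult_right_mono power_decreasing) (auto simp: Ts_def)
    finally show "real (card (box T)) \<le> real (card A)^h * \<eta>^(h - m)"
      by (simp add: mult.commute)
  qed
  also have "\<dots> = real (card Ts) * (real (card A)^h * \<eta>^(h - m))"
    by simp
  also have "\<dots> \<le> 2^h * (real (card A)^h * \<eta>^(h - m))"
  proof (rule mult_right_mono)
    have "card Ts \<le> card (Pow {..<h})"
      unfolding Ts_def by (intro card_mono) auto
    then show "real (card Ts) \<le> 2^h"
      by (simp add: card_Pow)
  qed (use \<eta> in simp)
  finally show ?thesis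
    by (simp add: mult.assoc)
qed

abbreviation cube :: "nat \<Rightarrow> (nat \<Rightarrow> real) set" where
  "cube n \<equiv> PiE_dflt {..<n} 0 (\<lambda>_. {0, 1})"

lemma mem_cube_iff: "x \<in> cube n \<longleftrightarrow> (\<forall>j<n. x j \<in> {0, 1}) \<and> (\<forall>j\<ge>n. x j = 0)"
  by (auto simp: PiE_dflt_def not_less)

lemma finite_cube: "finite (cube n)"
  by (rule finite_PiE_dflt) auto

lemma card_cube: "card (cube n) = 2^n"
  by (subst card_PiE_dflt) (auto simp: numeral_2_eq_2)

lemma inj_on_cube_diff_set:
  assumes "x0 \<in> cube n"
  shows "inj_on (\<lambda>x. {j. j < n \<and> x j \<noteq> x0 j}) (cube n)"
proof (rule inj_onI)
  fix x x' assume x: "x \<in> cube n" "x' \<in> cube n"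
    and eq: "{j. j < n \<and> x j \<noteq> x0 j} = {j. j < n \<and> x' j \<noteq> x0 j}"
  show "x = x'"
  proof
    fix j show "x j = x' j"
    proof (cases "j < n")
      case True
      then have "x j \<noteq> x0 j \<longleftrightarrow> x' j \<noteq> x0 j"
        using eq by (auto simp: set_eq_iff)
      moreover have "x j \<in> {0, 1}" "x' j \<in> {0, 1}" "x0 j \<in> {0, 1}"
        using x assms True by (simp_all add: mem_cube_iff)
      ultimately show ?thesis by auto
    next
      case False
      then show ?thesis using x by (simp add: mem_cube_iff)
    qed
  qed
qed

lemma card_cube_by_support:
  "card {x\<in>cube n. P {j. j < n \<and> x j \<noteq> 0}} = card {K. K \<subseteq> {..<n} \<and> P K}"
proof -
  define supp where "supp = (\<lambda>x :: nat \<Rightarrow> real. {j. j < n \<and> x j \<noteq> 0})"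
  have inj: "inj_on supp {x\<in>cube n. P (supp x)}"
    using inj_on_cube_diff_set[of "\<lambda>_. 0" n] by (auto simp: supp_def mem_cube_iff intro: inj_on_subset)
  have image: "supp ` {x\<in>cube n. P (supp x)} = {K. K \<subseteq> {..<n} \<and> P K}"
  proof (intro equalityI subsetI)
    fix K assume K: "K \<in> {K. K \<subseteq> {..<n} \<and> P K}"
    define x where "x j = (if j \<in> K then 1 else 0 :: real)" for j
    have "supp x = K" "x \<in> cube n"
      using K by (auto simp: supp_def x_def mem_cube_iff)
    then show "K \<in> supp ` {x\<in>cube n. P (supp x)}"
      using K by force
  qed (auto simp: supp_def)
  have "card {x\<in>cube n. P (supp x)} = card (supp ` {x\<in>cube n. P (supp x)})"
    using inj by (simp add: card_image)
  then show ?thesis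
    unfolding image
    by (simp add: supp_def)
qed

lemma sum_cube_eq_card: "x \<in> cube n \<Longrightarrow> (\<Sum>j<n. x j) = real (card {j. j < n \<and> x j \<noteq> 0})"
  by (subst sum.mono_neutral_cong_right[of "{..<n}" "{j. j < n \<and> x j \<noteq> 0}" _ "\<lambda>_. 1"])
    (auto simp: mem_cube_iff)

lemma sum_sq_diff_cube:
  assumes "x \<in> cube n" "x' \<in> cube n"
  shows "(\<Sum>j<n. (x j - x' j)^2) = real (card {j. j < n \<and> x j \<noteq> x' j})"
proof -
  have "(\<Sum>j<n. (x j - x' j)^2) = (\<Sum>j<n. if x j \<noteq> x' j then 1 else 0)"
  proof (intro sum.cong refl)
    fix j assume "j \<in> {..<n}"
    then have "x j \<in> {0, 1}" "x' j \<in> {0, 1}"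
      using assms by (simp_all add: mem_cube_iff)
    then show "(x j - x' j)^2 = (if x j \<noteq> x' j then 1 else 0)"
      by auto
  qed
  also have "\<dots> = real (card {j. j < n \<and> x j \<noteq> x' j})"
    by (simp add: sum.If_cases Int_def conj_commute)
  finally show ?thesis .
qed

lemma cube_Suc: "cube (Suc n) = cube n \<union> (\<lambda>x. x(n := 1)) ` cube n"
proof -
  have upd_Suc: "x(n := b) \<in> cube (Suc n)" if "x \<in> cube n" "b \<in> {0, 1}" for x b
    using that unfolding mem_cube_iff by (auto simp: less_Suc_eq)
  have upd_zero: "x(n := 0) \<in> cube n" if "x \<in> cube (Suc n)" for x
    unfolding mem_cube_iff
  proof (intro conjI allI impI)
    fix j assume "j < n"
    then show "(x(n := 0)) j \<in> {0, 1}" using that by (simp add: mem_cube_iff)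
  next
    fix j assume "n \<le> j"
    then show "(x(n := 0)) j = 0" using that by (cases "j = n") (simp_all add: mem_cube_iff)
  qed
  show ?thesis
  proof (intro equalityI subsetI)
    fix x assume x: "x \<in> cube (Suc n)"
    then have "x n \<in> {0, 1}"
      by (simp add: mem_cube_iff)
    then consider "x = x(n := 0)" | "x = (x(n := 0))(n := 1)"
      by (metis fun_upd_triv fun_upd_upd insertE singletonD)
    then show "x \<in> cube n \<union> (\<lambda>x. x(n := 1)) ` cube n"
      using upd_zero[OF x] by cases (metis UnI1, metis UnI2 imageI)
  next
    fix x assume "x \<in> cube n \<union> (\<lambda>x. x(n := 1)) ` cube n"
    then show "x \<in> cube (Suc n)"
    proof
      assume x: "x \<in> cube n"
      then have "x(n := 0) = x"
        by (intro fun_upd_idem) (simp add: mem_cube_iff)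
      then show ?thesis
        using upd_Suc[OF x, of 0] by simp
    next
      assume "x \<in> (\<lambda>x. x(n := 1)) ` cube n"
      then show ?thesis
        using upd_Suc by blast
    qed
  qed
qed

lemma sum_cube_Suc: "(\<Sum>x\<in>cube (Suc n). f x) = (\<Sum>x\<in>cube n. f x + f (x(n := 1)))"
proof -
  have zero: "x n = 0" if "x \<in> cube n" for x
    using that by (simp add: mem_cube_iff)
  have "cube n \<inter> (\<lambda>x. x(n := 1)) ` cube n = {}"
    using zero by fastforce
  moreover have "inj_on (\<lambda>x. x(n := 1)) (cube n)"
  proof (rule inj_onI)
    fix x x' assume "x \<in> cube n" "x' \<in> cube n" "x(n := 1) = x'(n := 1)"
    then show "x = x'"
      using zero by (metis fun_upd_triv fun_upd_upd)
  qed
  ultimately show ?thesis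
    unfolding cube_Suc by (simp add: sum.union_disjoint finite_cube sum.reindex sum.distrib)
qed

lemma card_subsets_card_le:
  assumes "finite A"
  shows "card {K. K \<subseteq> A \<and> card K \<le> r} \<le> (\<Sum>k\<le>r. card A choose k)"
proof -
  have "{K. K \<subseteq> A \<and> card K \<le> r} = (\<Union>k\<le>r. {K. K \<subseteq> A \<and> card K = k})"
    by auto
  then have "card {K. K \<subseteq> A \<and> card K \<le> r} \<le> (\<Sum>k\<le>r. card {K. K \<subseteq> A \<and> card K = k})"
    by (simp add: card_UN_le)
  also have "\<dots> = (\<Sum>k\<le>r. card A choose k)"
    using assms by (simp add: n_subsets)
  finally show ?thesis .
qed

lemma card_hamming_ball_le:
  assumes "x0 \<in> cube n"
  shows "card {x\<in>cube n. card {j. j < n \<and> x j \<noteq> x0 j} \<le> r} \<le> (\<Sum>k\<le>r. n choose k)"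
proof -
  define diff where "diff = (\<lambda>x :: nat \<Rightarrow> real. {j. j < n \<and> x j \<noteq> x0 j})"
  have "inj_on diff (cube n)"
    using inj_on_cube_diff_set[OF assms] by (simp add: diff_def)
  then have "card {x\<in>cube n. card (diff x) \<le> r} = card (diff ` {x\<in>cube n. card (diff x) \<le> r})"
    by (simp add: card_image inj_on_subset)
  also have "\<dots> \<le> card {K. K \<subseteq> {..<n} \<and> card K \<le> r}"
    by (intro card_mono) (auto simp: diff_def)
  also have "\<dots> \<le> (\<Sum>k\<le>r. n choose k)"
    using card_subsets_card_le[of "{..<n}" r] by simp
  finally show ?thesis
    by (simp add: diff_def)
qed

lemma sum_binomial_le_pow_div:
  fixes x :: real
  assumes x: "0 < x" "x \<le> 1"
  shows "real (\<Sum>k\<le>r. n choose k) \<le> (1 + x)^n / x^r"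
proof -
  have "real (\<Sum>k\<le>r. n choose k) \<le> (\<Sum>k\<le>r. real (n choose k) * x^k / x^r)"
    unfolding of_nat_sum
  proof (intro sum_mono)
    fix k assume "k \<in> {..r}"
    then have "x^r \<le> x^k"
      using x by (intro power_decreasing) auto
    then show "real (n choose k) \<le> real (n choose k) * x^k / x^r"
      using x by (simp add: le_divide_eq mult_left_mono)
  qed
  also have "\<dots> \<le> (\<Sum>k\<le>r+n. real (n choose k) * x^k) / x^r"
    using x by (simp add: sum_divide_distrib[symmetric] divide_right_mono sum_mono2)
  also have "(\<Sum>k\<le>r+n. real (n choose k) * x^k) = (\<Sum>k\<le>n. real (n choose k) * x^k)"
    by (rule sum.mono_neutral_right) auto
  also have "\<dots> = (x + 1)^n"
    by (simp add: binomial_ring)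
  finally show ?thesis
    by (simp add: add.commute)
qed

lemma exists_radius_sum_binomial_le:
  fixes e :: real
  assumes e: "0 < e" "e < 2"
  shows "\<exists>\<alpha>::real>0. \<forall>n. real (\<Sum>k\<le>nat \<lfloor>\<alpha> * n\<rfloor>. n choose k) \<le> (1 + e)^n"
proof -
  define x where "x = e/2"
  define \<rho> where "\<rho> = (1 + e) / (1 + x)"
  define \<alpha> where "\<alpha> = ln \<rho> / ln (1/x)"
  have x: "0 < x" "x < 1" and \<rho>: "1 < \<rho>"
    using e by (auto simp: x_def \<rho>_def field_simps)
  have \<alpha>: "\<alpha> > 0"
    using x \<rho> by (simp add: \<alpha>_def)
  have "real (\<Sum>k\<le>nat \<lfloor>\<alpha> * n\<rfloor>. n choose k) \<le> (1 + e)^n" for n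
  proof -
    define r where "r = nat \<lfloor>\<alpha> * n\<rfloor>"
    have "real r \<le> \<alpha> * n"
      using \<alpha> by (simp add: r_def)
    have "ln (1/x) = - ln x" "ln x < 0"
      using x by (simp_all add: ln_div)
    then have "\<alpha> * n * ln x = - (real n * ln \<rho>)"
      unfolding \<alpha>_def by (simp add: field_simps)
    have "real (\<Sum>k\<le>r. n choose k) \<le> (1 + x)^n / x powr (real r)"
      using sum_binomial_le_pow_div[where r=r and n=n] x by (simp add: powr_realpow)
    also have "\<dots> \<le> (1 + x)^n / x powr (\<alpha> * n)"
      using x \<open>real r \<le> \<alpha> * n\<close> by (intro divide_left_mono powr_mono') auto
    also have "x powr (\<alpha> * n) = exp (- (real n * ln \<rho>))"
      using x \<open>\<alpha> * n * ln x = - (real n * ln \<rho>)\<close> by (simp add: powr_def)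
    also have "\<dots> = (1/\<rho>)^n"
      using \<rho> by (simp add: exp_minus exp_of_nat_mult power_one_over inverse_eq_divide)
    also have "(1 + x)^n / (1/\<rho>)^n = (1 + e)^n"
      using x by (simp add: \<rho>_def power_divide)
    finally show ?thesis
      unfolding r_def .
  qed
  with \<alpha> show ?thesis
    by blast
qed

section \<open>Balanced rows and the law of the matrix\<close>

lemma bal_rows_eq: "bal_rows n = {x\<in>cube n. card {j. j < n \<and> x j \<noteq> 0} = n div 2}"
proof -
  have "x \<in> bal_rows n \<longleftrightarrow> x \<in> cube n \<and> (\<Sum>j<n. x j) = real (n div 2)" for x
    by (simp add: bal_rows_def mem_cube_iff)
  then show ?thesis
    using sum_cube_eq_card by auto
qed

lemma bal_rows_subset_cube: "bal_rows n \<subseteq> cube n"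
  by (auto simp: bal_rows_eq)

lemma finite_bal_rows: "finite (bal_rows n)"
  using bal_rows_subset_cube finite_cube by (rule finite_subset)

lemma card_bal_rows: "card (bal_rows n) = n choose (n div 2)"
  unfolding bal_rows_eq using card_cube_by_support[of n "\<lambda>K. card K = n div 2"] by (simp add: n_subsets)

lemma bal_rows_nonempty: "bal_rows n \<noteq> {}"
  using card_bal_rows[of n] by auto

lemma card_subsets_with_prefix_le:
  assumes "h \<le> n"
  shows "card {K. K \<subseteq> {..<n} \<and> K \<inter> {..<h} = U \<and> card K = k} \<le> (n - h) choose ((n - h) div 2)"
proof -
  define S where "S = {K. K \<subseteq> {..<n} \<and> K \<inter> {..<h} = U \<and> card K = k}"
  have "card S = card ((\<lambda>K. K - U) ` S)"
    by (rule card_image[symmetric], rule inj_onI) (auto simp: S_def)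
  also have "\<dots> \<le> card {K. K \<subseteq> {h..<n} \<and> card K = k - card U}"
  proof (rule card_mono)
    show "(\<lambda>K. K - U) ` S \<subseteq> {K. K \<subseteq> {h..<n} \<and> card K = k - card U}"
    proof (intro image_subsetI CollectI conjI)
      fix K assume K: "K \<in> S"
      then have "finite K" "U \<subseteq> K"
        by (auto simp: S_def finite_subset)
      then show "card (K - U) = k - card U"
        using K by (simp add: S_def card_Diff_subset finite_subset)
      show "K - U \<subseteq> {h..<n}"
        using K by (auto simp: S_def)
    qed
  qed (auto intro: finite_subset[of _ "Pow {h..<n}"])
  also have "\<dots> = (n - h) choose (k - card U)"
    by (simp add: n_subsets)
  also have "\<dots> \<le> (n - h) choose ((n - h) div 2)"
    by (rule binomial_maximum)
  finally show ?thesis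
    unfolding S_def .
qed

lemma card_bal_rows_with_prefix_le:
  assumes "h \<le> n"
  shows "card {x\<in>bal_rows n. \<forall>j<h. x j = u j} \<le> (n - h) choose ((n - h) div 2)"
proof -
  define U where "U = {j. j < h \<and> u j \<noteq> 0}"
  have "{x\<in>bal_rows n. \<forall>j<h. x j = u j}
      \<subseteq> {x\<in>cube n. (\<lambda>K. K \<inter> {..<h} = U \<and> card K = n div 2) {j. j < n \<and> x j \<noteq> 0}}"
    using assms by (auto simp: bal_rows_eq U_def)
  then have "card {x\<in>bal_rows n. \<forall>j<h. x j = u j}
      \<le> card {K. K \<subseteq> {..<n} \<and> K \<inter> {..<h} = U \<and> card K = n div 2}"
    unfolding card_cube_by_support[symmetric] by (rule card_mono[OF finite_subset[OF _ finite_cube], rotated]) auto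
  also have "\<dots> \<le> (n - h) choose ((n - h) div 2)"
    using assms by (rule card_subsets_with_prefix_le)
  finally show ?thesis .
qed

abbreviation bal_matrices :: "nat \<Rightarrow> (nat \<Rightarrow> nat \<Rightarrow> real) set" where
  "bal_matrices n \<equiv> PiE_dflt {..<n} (\<lambda>_. 0) (\<lambda>_. bal_rows n)"

lemma finite_bal_matrices: "finite (bal_matrices n)"
  by (rule finite_PiE_dflt) (auto simp: finite_bal_rows)

lemma card_bal_matrices: "card (bal_matrices n) = (n choose (n div 2))^n"
  by (subst card_PiE_dflt) (auto simp: card_bal_rows finite_bal_rows)

lemma column_in_cube:
  assumes "Q \<in> bal_matrices n"
  shows "(\<lambda>i. Q i j) \<in> cube n"
  unfolding mem_cube_iff
proof (intro conjI allI impI)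
  fix i assume "i < n"
  then have "Q i \<in> cube n"
    using assms bal_rows_subset_cube by (auto simp: PiE_dflt_def)
  then show "Q i j \<in> {0, 1}"
    by (cases "j < n") (simp_all add: mem_cube_iff)
next
  fix i assume "n \<le> i"
  then show "Q i j = 0"
    using assms by (simp add: PiE_dflt_def)
qed

lemma card_bal_matrices_with_columns_le:
  assumes h: "h \<le> n"
  shows "card {Q\<in>bal_matrices n. \<forall>i<n. \<forall>j<h. Q i j = X j i} \<le> ((n - h) choose ((n - h) div 2))^n"
proof -
  define F where "F = PiE_dflt {..<n} (\<lambda>_. 0) (\<lambda>i. {R\<in>bal_rows n. \<forall>j<h. R j = X j i})"
  have "{Q\<in>bal_matrices n. \<forall>i<n. \<forall>j<h. Q i j = X j i} \<subseteq> F"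
  proof (rule subsetI)
    fix Q assume Q: "Q \<in> {Q\<in>bal_matrices n. \<forall>i<n. \<forall>j<h. Q i j = X j i}"
    show "Q \<in> F"
      unfolding F_def
    proof (rule PiE_dflt_I)
      fix i assume "i \<in> {..<n}"
      then show "Q i \<in> {R\<in>bal_rows n. \<forall>j<h. R j = X j i}"
        using Q by (simp add: PiE_dflt_def)
    next
      fix i assume "i \<notin> {..<n}"
      then show "Q i = (\<lambda>_. 0)"
        using Q by (simp add: PiE_dflt_def)
    qed
  qed
  then have "card {Q\<in>bal_matrices n. \<forall>i<n. \<forall>j<h. Q i j = X j i} \<le> card F"
    by (rule card_mono[rotated]) (auto simp: F_def finite_bal_rows intro!: finite_PiE_dflt)
  also have "\<dots> = (\<Prod>i<n. card {R\<in>bal_rows n. \<forall>j<h. R j = X j i})"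
    unfolding F_def by (rule card_PiE_dflt) (auto simp: finite_bal_rows)
  also have "\<dots> \<le> ((n - h) choose ((n - h) div 2))^n"
    using prod_mono[of "{..<n}" "\<lambda>i. card {R\<in>bal_rows n. \<forall>j<h. R j = X j i}"
        "\<lambda>_. (n - h) choose ((n - h) div 2)"]
      card_bal_rows_with_prefix_le[OF h] by simp
  finally show ?thesis .
qed

lemma prob_random_Q:
  "measure_pmf.prob (random_Q n) E = card (bal_matrices n \<inter> E) / real (n choose (n div 2))^n"
proof -
  have "random_Q n = pmf_of_set (bal_matrices n)"
    unfolding random_Q_def using finite_bal_rows bal_rows_nonempty by (simp add: Pi_pmf_of_set)
  then show ?thesis
    using finite_bal_matrices bal_rows_nonempty by (simp add: measure_pmf_of_set card_bal_matrices)
qed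

lemma vecmat_remove_row:
  assumes "i < n"
  shows "vecmat n y Q j = y i * Q i j + vecmat n y (Q(i := (\<lambda>_. 0))) j"
proof -
  have "vecmat n y Q j = y i * Q i j + (\<Sum>k\<in>{..<n} - {i}. y k * Q k j)"
    unfolding vecmat_def using assms by (simp add: sum.remove)
  moreover have "vecmat n y (Q(i := (\<lambda>_. 0))) j = (\<Sum>k\<in>{..<n} - {i}. y k * Q k j)"
    unfolding vecmat_def using assms by (simp add: sum.remove)
  ultimately show ?thesis
    by simp
qed

lemma l2norm_le_iff:
  assumes "0 \<le> c"
  shows "l2norm n v \<le> c * sqrt (real n) \<longleftrightarrow> (\<Sum>j<n. (v j)^2) \<le> c^2 * n"
proof -
  have "c * sqrt (real n) = sqrt (c^2 * n)"
    using assms by (simp add: real_sqrt_mult)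
  then show ?thesis
    by (simp add: l2norm_def)
qed

section \<open>Anticoncentration on the cube\<close>

lemma cos_ge_one_minus_sq_half: "1 - x^2 / 2 \<le> cos (x::real)"
proof -
  have "1 - x^2 / 2 \<le> cos x" if "x \<ge> 0" for x :: real
  proof -
    have "cos 0 - 1 + 0^2 / 2 \<le> cos x - 1 + x^2 / 2"
    proof (rule DERIV_nonneg_imp_nondecreasing[OF that])
      fix t :: real assume "0 \<le> t"
      then show "\<exists>d. ((\<lambda>x. cos x - 1 + x^2 / 2) has_real_derivative d) (at t) \<and> d \<ge> 0"
        by (intro exI[of _ "t - sin t"]) (auto intro!: derivative_eq_intros simp: sin_x_le_x)
    qed
    then show ?thesis by simp
  qed
  from this[of x] this[of "-x"] show ?thesis
    by (cases "x \<ge> 0") auto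
qed

lemma sin_ge_minus_cube: "0 \<le> x \<Longrightarrow> x - x^3 / 6 \<le> sin (x::real)"
proof -
  assume "0 \<le> x"
  then have "sin 0 - 0 + 0^3 / 6 \<le> sin x - x + x^3 / 6"
  proof (rule DERIV_nonneg_imp_nondecreasing)
    fix t :: real
    show "\<exists>d. ((\<lambda>x. sin x - x + x^3 / 6) has_real_derivative d) (at t) \<and> d \<ge> 0"
      using cos_ge_one_minus_sq_half[of t]
      by (intro exI[of _ "cos t - 1 + t^2 / 2"])
        (auto intro!: derivative_eq_intros simp: power2_eq_square power3_eq_cube)
  qed
  then show ?thesis by simp
qed

lemma cos_le_taylor4: "cos x \<le> 1 - x^2 / 2 + x^4 / (24::real)"
proof -
  have "cos x \<le> 1 - x^2 / 2 + x^4 / 24" if "x \<ge> 0" for x :: real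
  proof -
    have "1 - 0^2 / 2 + 0^4 / 24 - cos 0 \<le> 1 - x^2 / 2 + x^4 / 24 - cos x"
    proof (rule DERIV_nonneg_imp_nondecreasing[OF that])
      fix t :: real assume "0 \<le> t"
      then show "\<exists>d. ((\<lambda>x. 1 - x^2 / 2 + x^4 / 24 - cos x) has_real_derivative d) (at t) \<and> d \<ge> 0"
        using sin_ge_minus_cube[of t]
        by (intro exI[of _ "sin t - t + t^3 / 6"])
          (auto intro!: derivative_eq_intros simp: power2_eq_square power3_eq_cube eval_nat_numeral)
    qed
    then show ?thesis by simp
  qed
  from this[of x] this[of "-x"] show ?thesis
    by (cases "x \<ge> 0") auto
qed

lemma abs_cos_le_exp: "\<bar>x::real\<bar> \<le> 1 \<Longrightarrow> \<bar>cos x\<bar> \<le> exp (- (x^2 / 3))"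
proof -
  assume x: "\<bar>x\<bar> \<le> 1"
  have "0 \<le> cos x"
    using x pi_gt3 by (intro cos_ge_zero) auto
  have "x^2 \<le> 1"
    using x by (metis abs_le_square_iff abs_one power_one)
  then have "x^4 \<le> x^2"
    using mult_left_le[of "x^2" "x^2"] by (simp add: power2_eq_square eval_nat_numeral)
  then have "cos x \<le> 1 - x^2 / 3"
    using cos_le_taylor4[of x] zero_le_power2[of x] by linarith
  also have "\<dots> \<le> exp (- (x^2 / 3))"
    using exp_ge_add_one_self[of "- (x^2 / 3)"] by simp
  finally show ?thesis
    using \<open>0 \<le> cos x\<close> by simp
qed

lemma sum_cube_cos:
  "(\<Sum>x\<in>cube n. cos (a + t * (\<Sum>i<n. y i * x i))) =
     2^n * cos (a + t * (\<Sum>i<n. y i) / 2) * (\<Prod>i<n. cos (t * y i / 2))"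
proof (induction n arbitrary: a)
  case 0
  have "cube 0 = {\<lambda>_. 0}"
    by (auto simp: PiE_dflt_def)
  then show ?case by simp
next
  case (Suc n)
  have step: "cos (a + t * (\<Sum>i<Suc n. y i * x i)) + cos (a + t * (\<Sum>i<Suc n. y i * (x(n := 1)) i))
      = 2 * cos (t * y n / 2) * cos ((a + t * y n / 2) + t * (\<Sum>i<n. y i * x i))"
    if "x \<in> cube n" for x
  proof -
    define c where "c = a + t * y n / 2 + t * (\<Sum>i<n. y i * x i)"
    have "x n = 0"
      using that by (simp add: mem_cube_iff)
    then have "a + t * (\<Sum>i<Suc n. y i * x i) = c - t * y n / 2"
      "a + t * (\<Sum>i<Suc n. y i * (x(n := 1)) i) = c + t * y n / 2"
      by (simp_all add: c_def algebra_simps)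
    then show ?thesis
      unfolding c_def[symmetric] by (simp add: cos_add cos_diff)
  qed
  have "(\<Sum>x\<in>cube (Suc n). cos (a + t * (\<Sum>i<Suc n. y i * x i)))
      = (\<Sum>x\<in>cube n. 2 * cos (t * y n / 2) * cos ((a + t * y n / 2) + t * (\<Sum>i<n. y i * x i)))"
    unfolding sum_cube_Suc by (intro sum.cong refl step)
  also have "\<dots> = 2 * cos (t * y n / 2) * (\<Sum>x\<in>cube n. cos ((a + t * y n / 2) + t * (\<Sum>i<n. y i * x i)))"
    by (rule sum_distrib_left[symmetric])
  also have "\<dots> = 2^Suc n * cos (a + t * (\<Sum>i<Suc n. y i) / 2) * (\<Prod>i<Suc n. cos (t * y i / 2))"
    unfolding Suc.IH by (simp add: algebra_simps add_divide_distrib)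
  finally show ?case .
qed

lemma abs_sum_cube_cos_le:
  assumes "\<And>i. i < n \<Longrightarrow> \<bar>t * y i\<bar> \<le> 2"
  shows "\<bar>\<Sum>x\<in>cube n. cos (t * (\<Sum>i<n. y i * x i))\<bar> \<le> 2^n * exp (- (t^2 * (\<Sum>i<n. (y i)^2) / 12))"
proof -
  have "\<bar>\<Sum>x\<in>cube n. cos (t * (\<Sum>i<n. y i * x i))\<bar>
      = 2^n * \<bar>cos (t * (\<Sum>i<n. y i) / 2)\<bar> * (\<Prod>i<n. \<bar>cos (t * y i / 2)\<bar>)"
    using sum_cube_cos[where a=0] by (simp add: abs_mult abs_prod)
  also have "\<dots> \<le> 2^n * 1 * (\<Prod>i<n. exp (- ((t * y i / 2)^2 / 3)))"
    using assms by (intro mult_mono prod_mono conjI abs_cos_le_exp) (auto simp: prod_nonneg)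
  also have "(\<Prod>i<n. exp (- ((t * y i / 2)^2 / 3))) = exp (- (\<Sum>i<n. t^2 * (y i)^2 / 12))"
    by (simp add: exp_sum[symmetric] sum_negf power_mult_distrib power_divide)
  also have "\<dots> = exp (- (t^2 * (\<Sum>i<n. (y i)^2) / 12))"
    by (simp add: sum_distrib_left sum_divide_distrib)
  finally show ?thesis
    by simp
qed

lemma fundamental_theorem_of_calculus_real:
  fixes f f' :: "real \<Rightarrow> real"
  assumes "a \<le> b" "\<And>x. (f has_real_derivative f' x) (at x)"
  shows "(f' has_integral (f b - f a)) {a..b}"
  using assms
  by (intro fundamental_theorem_of_calculus)
    (auto simp: has_real_derivative_iff_has_vector_derivative[symmetric] intro: DERIV_subset)

(* The integral of (w - t) cos (t z) over [0, w]. *)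
definition fejer_kernel :: "real \<Rightarrow> real \<Rightarrow> real" where
  "fejer_kernel w z = (if z = 0 then w^2 / 2 else (1 - cos (w * z)) / z^2)"

lemma fejer_kernel_has_integral:
  assumes "w > 0"
  shows "((\<lambda>t. (w - t) * cos (t * z)) has_integral fejer_kernel w z) {0..w}"
proof (cases "z = 0")
  case True
  have "((\<lambda>t. w - t) has_integral ((w * w - w^2 / 2) - (w * 0 - 0^2 / 2))) {0..w}"
    using assms by (intro fundamental_theorem_of_calculus_real[where f = "\<lambda>t. w * t - t^2 / 2"])
      (auto intro!: derivative_eq_intros)
  then show ?thesis
    using True by (simp add: fejer_kernel_def power2_eq_square)
next
  case False
  let ?F = "\<lambda>t. (w - t) * sin (t * z) / z - cos (t * z) / z^2"
  have "((\<lambda>t. (w - t) * cos (t * z)) has_integral (?F w - ?F 0)) {0..w}"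
    using assms False by (intro fundamental_theorem_of_calculus_real)
      (auto intro!: derivative_eq_intros simp: field_simps power2_eq_square)
  then show ?thesis
    using False by (simp add: fejer_kernel_def diff_divide_distrib)
qed

lemma fejer_kernel_nonneg: "0 \<le> fejer_kernel w z"
  by (simp add: fejer_kernel_def)

lemma fejer_kernel_ge:
  assumes "w > 0" "\<bar>z\<bar> \<le> 1 / w"
  shows "w^2 / 4 \<le> fejer_kernel w z"
proof -
  have "((\<lambda>t. (w - t) / 2) has_integral ((w * w / 2 - w^2 / 4) - (w * 0 / 2 - 0^2 / 4))) {0..w}"
    using assms by (intro fundamental_theorem_of_calculus_real[where f = "\<lambda>t. w * t / 2 - t^2 / 4"])
      (auto intro!: derivative_eq_intros)
  then have "((\<lambda>t. (w - t) / 2) has_integral (w^2 / 4)) {0..w}"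
    by (simp add: power2_eq_square)
  then show ?thesis
  proof (rule has_integral_le[OF _ fejer_kernel_has_integral[OF assms(1)]])
    fix t assume t: "t \<in> {0..w}"
    have "\<bar>t * z\<bar> \<le> w * (1 / w)"
      unfolding abs_mult using t assms by (intro mult_mono) auto
    then have "\<bar>t * z\<bar> \<le> 1"
      using assms by simp
    then have "(t * z)^2 \<le> 1"
      by (metis abs_le_square_iff abs_one power_one)
    then have "1 / 2 \<le> cos (t * z)"
      using cos_ge_one_minus_sq_half[of "t * z"] by linarith
    then show "(w - t) / 2 \<le> (w - t) * cos (t * z)"
      using t mult_left_mono[of "1/2" "cos (t * z)" "w - t"] by simp
  qed
qed

(* Esseen's inequality: integrate the Fourier bound abs_sum_cube_cos_le against the Fejer kernel,
   which is at least w^2/4 where |<y, x>| <= 1/w. *)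
lemma card_cube_small_inner_le:
  fixes w :: real and y :: "nat \<Rightarrow> real"
  assumes w: "w > 0" and y: "(\<Sum>i<n. (y i)^2) = 1" and small: "\<And>i. i < n \<Longrightarrow> \<bar>y i\<bar> * w \<le> 2"
  shows "real (card {x\<in>cube n. \<bar>\<Sum>i<n. y i * x i\<bar> \<le> 1 / w}) \<le> 8 * exp 3 / w * 2^n"
proof -
  define S where "S x = (\<Sum>i<n. y i * x i)" for x :: "nat \<Rightarrow> real"
  define C where "C = w * 2^n * exp 3"
  have kernel_sum: "((\<lambda>t. \<Sum>x\<in>cube n. (w - t) * cos (t * S x))
      has_integral (\<Sum>x\<in>cube n. fejer_kernel w (S x))) {0..w}"
    by (intro has_integral_sum finite_cube fejer_kernel_has_integral w)
  have majorant: "((\<lambda>t. C * exp (- t / 2))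
      has_integral (- 2 * C * exp (- w / 2) - (- 2 * C * exp (- 0 / 2)))) {0..w}"
    using w by (intro fundamental_theorem_of_calculus_real) (auto intro!: derivative_eq_intros)
  have "(\<Sum>x\<in>cube n. (w - t) * cos (t * S x)) \<le> C * exp (- t / 2)" if t: "t \<in> {0..w}" for t
  proof -
    have "\<bar>t * y i\<bar> \<le> 2" if "i < n" for i
    proof -
      have "\<bar>t * y i\<bar> = t * \<bar>y i\<bar>"
        using t by (simp add: abs_mult)
      also have "\<dots> \<le> w * \<bar>y i\<bar>"
        using t by (intro mult_right_mono) auto
      finally show ?thesis
        using small[OF that] by (simp add: mult.commute)
    qed
    then have "\<bar>\<Sum>x\<in>cube n. cos (t * S x)\<bar> \<le> 2^n * exp (- (t^2 / 12))"
      using abs_sum_cube_cos_le[of n t y] y by (simp add: S_def)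
    also have "\<dots> \<le> 2^n * (exp 3 * exp (- t / 2))"
    proof -
      have "- (t^2 / 12) \<le> 3 + - t / 2"
        using zero_le_power2[of "t - 3"] by (simp add: power2_eq_square algebra_simps)
      then show ?thesis
        by (simp flip: exp_add)
    qed
    finally have bound: "\<bar>\<Sum>x\<in>cube n. cos (t * S x)\<bar> \<le> 2^n * (exp 3 * exp (- t / 2))" .
    have "(w - t) * (\<Sum>x\<in>cube n. cos (t * S x)) \<le> (w - t) * \<bar>\<Sum>x\<in>cube n. cos (t * S x)\<bar>"
      using t by (intro mult_left_mono) auto
    also have "\<dots> \<le> w * (2^n * (exp 3 * exp (- t / 2)))"
      using t bound by (intro mult_mono) auto
    finally show ?thesis
      by (simp add: C_def sum_distrib_left mult_ac)
  qed
  then have "(\<Sum>x\<in>cube n. fejer_kernel w (S x)) \<le> - 2 * C * exp (- w / 2) - (- 2 * C * exp (- 0 / 2))"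
    by (rule has_integral_le[OF kernel_sum majorant])
  also have "\<dots> \<le> 2 * C"
    using w by (simp add: C_def)
  finally have "(\<Sum>x\<in>cube n. fejer_kernel w (S x)) \<le> 2 * C" .
  moreover have "real (card {x\<in>cube n. \<bar>S x\<bar> \<le> 1 / w}) * (w^2 / 4)
      \<le> (\<Sum>x\<in>cube n. fejer_kernel w (S x))"
  proof -
    have "real (card {x\<in>cube n. \<bar>S x\<bar> \<le> 1 / w}) * (w^2 / 4)
        \<le> (\<Sum>x\<in>{x\<in>cube n. \<bar>S x\<bar> \<le> 1 / w}. fejer_kernel w (S x))"
      using fejer_kernel_ge[OF w] by (intro sum_bounded_below) auto
    also have "\<dots> \<le> (\<Sum>x\<in>cube n. fejer_kernel w (S x))"
      by (intro sum_mono2 finite_cube fejer_kernel_nonneg) auto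
    finally show ?thesis .
  qed
  ultimately have "real (card {x\<in>cube n. \<bar>S x\<bar> \<le> 1 / w}) * (w^2 / 4) \<le> 2 * C"
    by linarith
  then show ?thesis
    using w by (simp add: S_def C_def power2_eq_square field_simps)
qed

section \<open>A coefficient of y is large\<close>

lemma card_cube_near_line_le:
  fixes a c \<delta> \<alpha> :: real and v :: "nat \<Rightarrow> real"
  assumes \<delta>: "0 < \<delta>" "\<delta> \<le> \<bar>a\<bar>" and c: "4 * c^2 \<le> \<alpha> * \<delta>^2"
  shows "card {x\<in>cube n. (\<Sum>j<n. (a * x j + v j)^2) \<le> c^2 * n} \<le> (\<Sum>k\<le>nat \<lfloor>\<alpha> * n\<rfloor>. n choose k)"
proof (cases "{x\<in>cube n. (\<Sum>j<n. (a * x j + v j)^2) \<le> c^2 * n} = {}")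
  case False
  then obtain x0 where x0: "x0 \<in> cube n" "(\<Sum>j<n. (a * x0 j + v j)^2) \<le> c^2 * n"
    by auto
  have "card {j. j < n \<and> x j \<noteq> x0 j} \<le> nat \<lfloor>\<alpha> * n\<rfloor>"
    if x: "x \<in> cube n" "(\<Sum>j<n. (a * x j + v j)^2) \<le> c^2 * n" for x
  proof -
    have "\<delta>^2 \<le> a^2"
      using \<delta> by (metis abs_le_square_iff abs_of_pos)
    then have "\<delta>^2 * card {j. j < n \<and> x j \<noteq> x0 j} \<le> a^2 * (\<Sum>j<n. (x j - x0 j)^2)"
      using sum_sq_diff_cube[OF x(1) x0(1)] by (simp add: mult_right_mono)
    also have "\<dots> = (\<Sum>j<n. ((a * x j + v j) - (a * x0 j + v j))^2)"
      by (simp add: sum_distrib_left power_mult_distrib right_diff_distrib[symmetric])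
    also have "\<dots> \<le> (\<Sum>j<n. 2 * (a * x j + v j)^2 + 2 * (a * x0 j + v j)^2)"
    proof (rule sum_mono)
      fix j
      show "((a * x j + v j) - (a * x0 j + v j))^2 \<le> 2 * (a * x j + v j)^2 + 2 * (a * x0 j + v j)^2"
        using zero_le_power2[of "(a * x j + v j) + (a * x0 j + v j)"] by (simp add: power2_eq_square algebra_simps)
    qed
    also have "\<dots> \<le> 4 * c^2 * n"
      using x(2) x0(2) by (simp add: sum.distrib sum_distrib_left[symmetric])
    also have "\<dots> \<le> \<delta>^2 * (\<alpha> * n)"
      using c mult_right_mono[OF c, of "real n"] by (simp add: mult_ac)
    finally have "real (card {j. j < n \<and> x j \<noteq> x0 j}) \<le> \<alpha> * n"
      using \<delta> by simp
    then show ?thesis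
      by linarith
  qed
  then have "card {x\<in>cube n. (\<Sum>j<n. (a * x j + v j)^2) \<le> c^2 * n}
      \<le> card {x\<in>cube n. card {j. j < n \<and> x j \<noteq> x0 j} \<le> nat \<lfloor>\<alpha> * n\<rfloor>}"
    by (intro card_mono) (auto simp: finite_cube)
  also have "\<dots> \<le> (\<Sum>k\<le>nat \<lfloor>\<alpha> * n\<rfloor>. n choose k)"
    by (rule card_hamming_ball_le[OF x0(1)])
  finally show ?thesis .
next
  case True
  then show ?thesis
    by (simp only: card.empty zero_le)
qed

lemma card_small_norm_large_coord_le:
  fixes y :: "nat \<Rightarrow> real" and c \<delta> \<alpha> :: real
  assumes i: "i < n" and \<delta>: "0 < \<delta>" "\<delta> \<le> \<bar>y i\<bar>" and c: "4 * c^2 \<le> \<alpha> * \<delta>^2"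
  shows "card (bal_matrices n \<inter> {Q. (\<Sum>j<n. (vecmat n y Q j)^2) \<le> c^2 * n})
      \<le> (n choose (n div 2))^(n - 1) * (\<Sum>k\<le>nat \<lfloor>\<alpha> * n\<rfloor>. n choose k)"
proof -
  define E where "E = bal_matrices n \<inter> {Q. (\<Sum>j<n. (vecmat n y Q j)^2) \<le> c^2 * n}"
  define drop where "drop Q = Q(i := (\<lambda>_. 0))" for Q :: "nat \<Rightarrow> nat \<Rightarrow> real"
  define B where "B = PiE_dflt {..<n} (\<lambda>_. 0) (\<lambda>k. if k = i then {\<lambda>_. 0} else bal_rows n)"
  have card_B: "card B = (n choose (n div 2))^(n - 1)"
  proof -
    have "card B = (\<Prod>k<n. if k = i then 1 else n choose (n div 2))"
      unfolding B_def by (subst card_PiE_dflt) (auto simp: finite_bal_rows card_bal_rows intro!: prod.cong)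
    also have "\<dots> = (n choose (n div 2))^card ({..<n} - {i})"
      by (simp add: prod.If_cases Diff_eq)
    also have "\<dots> = (n choose (n div 2))^(n - 1)"
      using i by simp
    finally show ?thesis .
  qed
  have fibre: "card {Q\<in>E. drop Q = Q'} \<le> (\<Sum>k\<le>nat \<lfloor>\<alpha> * n\<rfloor>. n choose k)" for Q'
  proof -
    have inj: "inj_on (\<lambda>Q. Q i) {Q\<in>E. drop Q = Q'}"
    proof (rule inj_onI)
      fix Q1 Q2 assume "Q1 \<in> {Q\<in>E. drop Q = Q'}" "Q2 \<in> {Q\<in>E. drop Q = Q'}" "Q1 i = Q2 i"
      then have "drop Q1 = drop Q2" "Q1 i = Q2 i"
        by simp_all
      show "Q1 = Q2"
      proof
        fix k
        show "Q1 k = Q2 k"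
          using fun_cong[OF \<open>drop Q1 = drop Q2\<close>, of k] \<open>Q1 i = Q2 i\<close>
          by (cases "k = i") (simp_all add: drop_def)
      qed
    qed
    have image: "(\<lambda>Q. Q i) ` {Q\<in>E. drop Q = Q'}
        \<subseteq> {x\<in>cube n. (\<Sum>j<n. (y i * x j + vecmat n y Q' j)^2) \<le> c^2 * n}"
    proof (rule image_subsetI)
      fix Q assume Q: "Q \<in> {Q\<in>E. drop Q = Q'}"
      then have "Q i \<in> bal_rows n"
        using i by (simp add: E_def PiE_dflt_def)
      moreover have "vecmat n y Q j = y i * Q i j + vecmat n y Q' j" for j
      proof -
        have "Q' = Q(i := (\<lambda>_. 0))"
          using Q by (simp add: drop_def)
        then show ?thesis
          using vecmat_remove_row[OF i, of y Q j] by simp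
      qed
      ultimately show "Q i \<in> {x\<in>cube n. (\<Sum>j<n. (y i * x j + vecmat n y Q' j)^2) \<le> c^2 * n}"
        using Q bal_rows_subset_cube by (auto simp: E_def)
    qed
    have "card {Q\<in>E. drop Q = Q'} = card ((\<lambda>Q. Q i) ` {Q\<in>E. drop Q = Q'})"
      using inj by (simp add: card_image)
    also have "\<dots> \<le> card {x\<in>cube n. (\<Sum>j<n. (y i * x j + vecmat n y Q' j)^2) \<le> c^2 * n}"
      using image by (intro card_mono) (simp_all add: finite_cube)
    also have "\<dots> \<le> (\<Sum>k\<le>nat \<lfloor>\<alpha> * n\<rfloor>. n choose k)"
      by (rule card_cube_near_line_le[OF \<delta> c])
    finally show ?thesis .
  qed
  have "card E \<le> card B * (\<Sum>k\<le>nat \<lfloor>\<alpha> * n\<rfloor>. n choose k)"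
  proof (rule card_le_mult_fibres[OF _ _ _ fibre])
    show "finite E" "finite B"
      using finite_bal_matrices by (auto simp: E_def B_def finite_bal_rows)
    show "drop ` E \<subseteq> B"
      by (auto simp: E_def B_def drop_def PiE_dflt_def)
  qed
  then show ?thesis
    unfolding E_def card_B .
qed

lemma prob_small_norm_large_coord:
  fixes y :: "nat \<Rightarrow> real" and c \<delta> \<alpha> :: real
  assumes i: "i < n" and \<delta>: "0 < \<delta>" "\<delta> \<le> \<bar>y i\<bar>" and c: "4 * c^2 \<le> \<alpha> * \<delta>^2"
  shows "measure_pmf.prob (random_Q n) {Q. (\<Sum>j<n. (vecmat n y Q j)^2) \<le> c^2 * n}
      \<le> (real n + 1) * real (\<Sum>k\<le>nat \<lfloor>\<alpha> * n\<rfloor>. n choose k) / 2^n"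
proof -
  define N where "N = real (n choose (n div 2))"
  define H where "H = real (\<Sum>k\<le>nat \<lfloor>\<alpha> * n\<rfloor>. n choose k)"
  have "real (2^n) \<le> real ((n + 1) * (n choose (n div 2)))"
    by (simp only: of_nat_le_iff central_binomial_ge)
  then have N: "0 < N" "2^n \<le> (real n + 1) * N"
    by (simp_all add: N_def algebra_simps)
  have "real (card (bal_matrices n \<inter> {Q. (\<Sum>j<n. (vecmat n y Q j)^2) \<le> c^2 * n})) \<le> N^(n - 1) * H"
    using card_small_norm_large_coord_le[where y=y and i=i and \<delta>=\<delta>, OF assms]
    unfolding N_def H_def by (simp only: of_nat_mult[symmetric] of_nat_power[symmetric] of_nat_le_iff)
  then have "measure_pmf.prob (random_Q n) {Q. (\<Sum>j<n. (vecmat n y Q j)^2) \<le> c^2 * n}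
      \<le> N^(n - 1) * H / N^n"
    unfolding prob_random_Q N_def[symmetric] by (rule divide_right_mono) (simp add: N_def)
  also have "\<dots> = H / N"
  proof -
    obtain m where "n = Suc m"
      using i less_imp_Suc_add by blast
    then show ?thesis
      using N(1) by simp
  qed
  also have "\<dots> \<le> (real n + 1) * H / 2^n"
  proof -
    have "H * 2^n \<le> H * ((real n + 1) * N)"
      by (rule mult_left_mono[OF N(2)]) (simp only: H_def of_nat_0_le_iff)
    then show ?thesis
      using N(1) by (simp add: field_simps)
  qed
  finally show ?thesis
    unfolding H_def .
qed

section \<open>All coefficients of y are small\<close>

(* Only the first h columns are constrained.  Fixing them leaves each row at most D completions,
   and for h = n/2 the loss 2^h D / C(n, n/2) per row is bounded; constraining all n columns
   would instead cost a factor of order sqrt n per row. *)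
lemma card_small_norm_small_coords_le:
  fixes y :: "nat \<Rightarrow> real" and c w \<eta> :: real
  assumes w: "0 < w" and y: "(\<Sum>i<n. (y i)^2) = 1" and small: "\<And>i. i < n \<Longrightarrow> \<bar>y i\<bar> * w \<le> 2"
    and c: "16 * c^2 * w^2 \<le> 1" and \<eta>: "8 * exp 3 / w \<le> \<eta>" "\<eta> \<le> 1" and h: "h \<le> n"
  shows "real (card (bal_matrices n \<inter> {Q. (\<Sum>j<n. (vecmat n y Q j)^2) \<le> c^2 * n}))
      \<le> 2^h * (2^n)^h * \<eta>^(h - n div 16) * real ((n - h) choose ((n - h) div 2))^n"
proof -
  define E where "E = bal_matrices n \<inter> {Q. (\<Sum>j<n. (vecmat n y Q j)^2) \<le> c^2 * n}"
  define D where "D = (n - h) choose ((n - h) div 2)"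
  define S where "S = {x\<in>cube n. \<bar>\<Sum>i<n. y i * x i\<bar> \<le> 1 / w}"
  define cols where "cols Q = (\<lambda>j. if j < h then (\<lambda>i. Q i j) else (\<lambda>_. 0))"
    for Q :: "nat \<Rightarrow> nat \<Rightarrow> real"
  define C where
    "C = {X\<in>PiE_dflt {..<h} (\<lambda>_. 0) (\<lambda>_. cube n). card {j. j < h \<and> X j \<notin> S} \<le> n div 16}"
  have cols_E: "cols ` E \<subseteq> C"
  proof (rule image_subsetI)
    fix Q assume Q: "Q \<in> E"
    have col: "(\<lambda>i. Q i j) \<in> cube n" for j
      using Q column_in_cube by (simp add: E_def)
    have "{j. j < h \<and> cols Q j \<notin> S} = {j\<in>{..<h}. 1 / w < \<bar>vecmat n y Q j\<bar>}"
      using col by (auto simp: cols_def S_def vecmat_def)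
    moreover have "real (card {j\<in>{..<h}. 1 / w < \<bar>vecmat n y Q j\<bar>}) * (1 / w)^2 \<le> c^2 * n"
    proof (rule card_large_terms_le)
      have "(\<Sum>j<h. (vecmat n y Q j)^2) \<le> (\<Sum>j<n. (vecmat n y Q j)^2)"
        using h by (intro sum_mono2) auto
      then show "(\<Sum>j<h. (vecmat n y Q j)^2) \<le> c^2 * n"
        using Q by (simp add: E_def)
    qed (use w in auto)
    ultimately have "16 * real (card {j. j < h \<and> cols Q j \<notin> S}) \<le> 16 * c^2 * w^2 * n"
      using w by (simp add: power_divide field_simps)
    also have "\<dots> \<le> n"
      using mult_right_mono[OF c, of "real n"] by simp
    finally have "card {j. j < h \<and> cols Q j \<notin> S} \<le> n div 16"
      by linarith
    moreover have "cols Q \<in> PiE_dflt {..<h} (\<lambda>_. 0) (\<lambda>_. cube n)"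
      using col by (simp add: cols_def PiE_dflt_def)
    ultimately show "cols Q \<in> C"
      by (simp add: C_def)
  qed
  have fibre: "card {Q\<in>E. cols Q = X} \<le> D^n" for X
  proof -
    have "{Q\<in>E. cols Q = X} \<subseteq> {Q\<in>bal_matrices n. \<forall>i<n. \<forall>j<h. Q i j = X j i}"
      by (auto simp: E_def cols_def)
    then have "card {Q\<in>E. cols Q = X} \<le> card {Q\<in>bal_matrices n. \<forall>i<n. \<forall>j<h. Q i j = X j i}"
      by (rule card_mono[rotated]) (simp add: finite_bal_matrices)
    also have "\<dots> \<le> D^n"
      unfolding D_def by (rule card_bal_matrices_with_columns_le[OF h])
    finally show ?thesis .
  qed
  have "card E \<le> card C * D^n"
    by (rule card_le_mult_fibres[OF _ _ cols_E fibre])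
      (auto simp: E_def C_def finite_bal_matrices finite_cube intro!: finite_PiE_dflt)
  then have "real (card E) \<le> real (card C) * real D^n"
    by (simp only: of_nat_mult[symmetric] of_nat_power[symmetric] of_nat_le_iff)
  also have "\<dots> \<le> 2^h * (2^n)^h * \<eta>^(h - n div 16) * real D^n"
  proof (rule mult_right_mono)
    have "real (card S) \<le> \<eta> * card (cube n)"
      using card_cube_small_inner_le[OF w y small] mult_right_mono[OF \<eta>(1), of "2^n"]
      by (simp add: S_def card_cube)
    moreover have "0 < 8 * exp 3 / w"
      using w by simp
    then have "0 \<le> \<eta>"
      using \<eta>(1) by linarith
    ultimately show "real (card C) \<le> 2^h * (2^n)^h * \<eta>^(h - n div 16)"
      using card_tuples_mostly_in_le[OF finite_cube _ _ _ \<eta>(2),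
          where S=S and h=h and d="\<lambda>_. 0" and m="n div 16"]
      by (simp add: C_def S_def card_cube)
  qed simp
  finally show ?thesis
    unfolding E_def D_def .
qed

lemma prob_small_norm_small_coords:
  fixes y :: "nat \<Rightarrow> real" and c :: real
  assumes n: "2 \<le> n" and y: "(\<Sum>i<n. (y i)^2) = 1" and small: "\<And>i. i < n \<Longrightarrow> \<bar>y i\<bar> \<le> 1 / 2^27"
    and c: "\<bar>c\<bar> \<le> 1 / 2^30"
  shows "measure_pmf.prob (random_Q n) {Q. (\<Sum>j<n. (vecmat n y Q j)^2) \<le> c^2 * n} \<le> (1/2)^n"
proof -
  \<comment> \<open>w makes the anticoncentration bound 8 exp 3 / w at most \<eta>; then 20 (n/2 - n/16) beats 5n/2.\<close>
  define w :: real where "w = 2^28"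
  define \<eta> :: real where "\<eta> = 1 / 2^20"
  define h where "h = n div 2"
  define k where "k = h - n div 16"
  define N where "N = real (n choose (n div 2))"
  define D where "D = real ((n - h) choose ((n - h) div 2))"
  have N: "0 < N"
    by (simp add: N_def)
  have "real (card (bal_matrices n \<inter> {Q. (\<Sum>j<n. (vecmat n y Q j)^2) \<le> c^2 * n}))
      \<le> 2^h * (2^n)^h * \<eta>^k * D^n"
    unfolding k_def D_def
  proof (rule card_small_norm_small_coords_le[OF _ y])
    show "\<bar>y i\<bar> * w \<le> 2" if "i < n" for i
      using small[OF that] by (simp add: w_def field_simps)
    have "\<bar>c\<bar> * 2^30 \<le> 1"
      using c by (simp add: field_simps)
    then have "(\<bar>c\<bar> * 2^30)^2 \<le> 1"
      by (intro power_le_one) auto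
    then show "16 * c^2 * w^2 \<le> 1"
      by (simp add: w_def power_mult_distrib)
    have "exp (3::real) = exp 1 ^ 3"
      using exp_of_nat_mult[of 3 1] by simp
    also have "\<dots> \<le> 3^3"
      by (rule power_mono[OF exp_le]) simp
    finally show "8 * exp 3 / w \<le> \<eta>"
      by (simp add: w_def \<eta>_def)
  qed (simp_all add: w_def \<eta>_def h_def)
  also have "2^h * (2^n)^h * \<eta>^k * D^n = 2^h * \<eta>^k * (2^h * D)^n"
    by (simp add: power_mult_distrib flip: power_mult)
  also have "\<dots> \<le> 2^h * \<eta>^k * (2 * N)^n"
    using central_binomial_half_le[of n]
    by (intro mult_left_mono power_mono) (simp_all add: h_def D_def N_def \<eta>_def)
  finally have "measure_pmf.prob (random_Q n) {Q. (\<Sum>j<n. (vecmat n y Q j)^2) \<le> c^2 * n}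
      \<le> 2^h * \<eta>^k * 2^n"
    unfolding prob_random_Q N_def[symmetric] using N
    by (simp add: divide_le_eq power_mult_distrib mult.assoc)
  also have "\<dots> \<le> (1/2)^n"
  proof -
    have "h + 2 * n \<le> 20 * k"
      using n by (simp add: h_def k_def)
    then have "(2::real)^(h + (n + n)) \<le> 2^(20 * k)"
      using power_increasing[of "h + (n + n)" "20 * k" "2::real"] by simp
    then have "(2::real)^h * 2^n * 2^n \<le> (2^20)^k"
      by (simp only: power_add power_mult mult.assoc)
    then show ?thesis
      by (simp add: \<eta>_def power_one_over field_simps)
  qed
  finally show ?thesis .
qed

lemma eventually_Suc_mult_pow_le:
  fixes e :: real
  assumes "0 < e"
  shows "eventually (\<lambda>n. (real n + 1) * ((1 + e) / 2)^n \<le> (1/2 + e)^n) sequentially"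
proof -
  define b where "b = (1 + e) / (1 + 2 * e)"
  have b: "0 < b" "b < 1"
    using assms by (auto simp: b_def field_simps)
  have "(\<lambda>n. real n * b^n + b^n) \<longlonglongrightarrow> 0 + 0"
    using b by (intro tendsto_add powser_times_n_limit_0 LIMSEQ_power_zero) auto
  then have "eventually (\<lambda>n. real n * b^n + b^n < 1) sequentially"
    by (rule order_tendstoD(2)) simp
  then show ?thesis
  proof (rule eventually_mono)
    fix n assume "real n * b^n + b^n < 1"
    then have "((real n + 1) * b^n) * (1/2 + e)^n \<le> 1 * (1/2 + e)^n"
      using assms by (intro mult_right_mono) (auto simp: algebra_simps)
    moreover have "(1 + e) / 2 = b * (1/2 + e)"
      using assms by (simp add: b_def field_simps)
    ultimately show "(real n + 1) * ((1 + e) / 2)^n \<le> (1/2 + e)^n"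
      by (simp only: power_mult_distrib mult.assoc mult_1)
  qed
qed

lemma prob_small_norm_le:
  fixes y :: "nat \<Rightarrow> real" and c \<alpha> e :: real
  assumes n: "2 \<le> n" and y: "(\<Sum>i<n. (y i)^2) = 1"
    and c: "0 \<le> c" "c \<le> 1 / 2^30" "4 * c^2 \<le> \<alpha> / 2^54"
    and \<alpha>: "real (\<Sum>k\<le>nat \<lfloor>\<alpha> * n\<rfloor>. n choose k) \<le> (1 + e)^n"
  shows "measure_pmf.prob (random_Q n) {Q. l2norm n (vecmat n y Q) \<le> c * sqrt (real n)}
      \<le> max ((real n + 1) * ((1 + e) / 2)^n) ((1/2)^n)"
proof -
  have "{Q. l2norm n (vecmat n y Q) \<le> c * sqrt (real n)} = {Q. (\<Sum>j<n. (vecmat n y Q j)^2) \<le> c^2 * n}"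
    by (simp add: l2norm_le_iff[OF c(1)])
  moreover have "measure_pmf.prob (random_Q n) {Q. (\<Sum>j<n. (vecmat n y Q j)^2) \<le> c^2 * n}
      \<le> max ((real n + 1) * ((1 + e) / 2)^n) ((1/2)^n)"
  proof (cases "\<exists>i<n. 1 / 2^27 \<le> \<bar>y i\<bar>")
    case True
    then obtain i where i: "i < n" "1 / 2^27 \<le> \<bar>y i\<bar>"
      by blast
    have "4 * c^2 \<le> \<alpha> * (1 / 2^27)^2"
      using c(3) by (simp add: power_one_over)
    then have "measure_pmf.prob (random_Q n) {Q. (\<Sum>j<n. (vecmat n y Q j)^2) \<le> c^2 * n}
        \<le> (real n + 1) * real (\<Sum>k\<le>nat \<lfloor>\<alpha> * n\<rfloor>. n choose k) / 2^n"
      using i by (intro prob_small_norm_large_coord[where y=y and i=i and \<delta>="1 / 2^27"]) simp_all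
    also have "\<dots> \<le> (real n + 1) * (1 + e)^n / 2^n"
      using \<alpha> by (intro divide_right_mono mult_left_mono) simp_all
    finally show ?thesis
      by (simp add: power_divide)
  next
    case False
    then have "measure_pmf.prob (random_Q n) {Q. (\<Sum>j<n. (vecmat n y Q j)^2) \<le> c^2 * n} \<le> (1/2)^n"
      using c by (intro prob_small_norm_small_coords[OF n y]) auto
    then show ?thesis
      by simp
  qed
  ultimately show ?thesis
    by simp
qed

theorem lemma6p2:
  fixes \<epsilon> :: real
  assumes "\<epsilon> > 0"
  shows "\<exists>c::real. c > 0 \<and> (\<exists>n0::nat. n0 > 0 \<and>
           (\<forall>n\<ge>n0. \<forall>y::nat \<Rightarrow> real. (\<Sum>i<n. (y i)\<^sup>2) = 1 \<longrightarrow>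
              measure_pmf.prob (random_Q n)
                {Q. l2norm n (vecmat n y Q) \<le> c * sqrt (real n)} \<le> (1/2 + \<epsilon>) ^ n))"
proof -
  define e where "e = min \<epsilon> 1"
  have e: "0 < e" "e < 2" "e \<le> \<epsilon>"
    using assms by (auto simp: e_def)
  obtain \<alpha> :: real where \<alpha>: "\<alpha> > 0" "\<And>n. real (\<Sum>k\<le>nat \<lfloor>\<alpha> * n\<rfloor>. n choose k) \<le> (1 + e)^n"
    using exists_radius_sum_binomial_le[OF e(1,2)] by blast
  define c where "c = min (1 / 2^30) (sqrt \<alpha> / 2^28)"
  have c: "0 < c" "c \<le> 1 / 2^30" "4 * c^2 \<le> \<alpha> / 2^54"
  proof -
    have "c \<le> sqrt \<alpha> / 2^28"
      by (simp add: c_def)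
    then have "c^2 \<le> (sqrt \<alpha> / 2^28)^2"
      using \<alpha>(1) by (intro power_mono) (auto simp: c_def)
    then show "4 * c^2 \<le> \<alpha> / 2^54"
      using \<alpha>(1) by (simp add: power_divide)
  qed (use \<alpha>(1) in \<open>auto simp: c_def\<close>)
  obtain N0 where N0: "\<And>n. N0 \<le> n \<Longrightarrow> (real n + 1) * ((1 + e) / 2)^n \<le> (1/2 + e)^n"
    using eventually_Suc_mult_pow_le[OF e(1)] by (auto simp: eventually_sequentially)
  have "measure_pmf.prob (random_Q n) {Q. l2norm n (vecmat n y Q) \<le> c * sqrt (real n)} \<le> (1/2 + \<epsilon>)^n"
    if n: "max 2 N0 \<le> n" and y: "(\<Sum>i<n. (y i)^2) = 1" for n y
  proof -
    have "(1/2 + e)^n \<le> (1/2 + \<epsilon>)^n" "((1::real)/2)^n \<le> (1/2 + \<epsilon>)^n"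
      using e by (auto intro: power_mono)
    then show ?thesis
      using prob_small_norm_le[OF _ y c(1)[THEN less_imp_le] c(2,3) \<alpha>(2)] N0 n by fastforce
  qed
  then show ?thesis
    using c(1) by (intro exI[of _ c] conjI exI[of _ "max 2 N0"]) auto
qed

end
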